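(* Let $\mathbf{L}$ be an intermediate propositional logic with $\vdash_{\mathbf{L}}\lnot A\lor\lnot\lnot A$. Then for every derivation $\pi$ in $\varepsilon\tau(\mathbf{L})$ whose end formula is a negation $\lnot D$, every critical $\varepsilon\tau$-term $e$ of $\pi$ has a complete $e$-elimination set.
   Context: Intermediate propositional logic: contains intuitionistic, contained in classical propositional logic, closed under modus ponens and substitution. $\varepsilon\tau$-terms: $\varepsilon x\,A(x)$, $\tau x\,A(x)$. Critical formulas: $A(t)\to A(\varepsilon x\,A(x))$ (belonging to $\varepsilon x\,A(x)$) and $A(\tau x\,A(x))\to A(t)$ (belonging to $\tau x\,A(x)$). A derivation $\pi$ in $\varepsilon\tau(\mathbf{L})$ is a derivation in the quantifier-free language with $\varepsilon\tau$-terms from a finite set of critical formulas using substitution instances of theorems of $\mathbf{L}$ and modus ponens; $e$ is a critical term of $\pi$ if a critical formula used in $\pi$ belongs to $e$. Write the critical formulas of $\pi$ as $\Gamma\cup\Lambda(e)$, $\Lambda(e)$ those belonging to $e$, and the end formula as $D'(e)$. $\{s_1,\dots,s_k\}$ is a complete $e$-elimination set if $\Gamma[s_1/e],\dots,\Gamma[s_k/e]\vdash_{\mathbf{L}}D'(s_1)\lor\dots\lor D'(s_k)$, where $[s/e]$ replaces every occurrence of $e$ by $s$ and $\vdash_{\mathbf{L}}$ is derivability from assumptions by substitution instances of theorems of $\mathbf{L}$ and modus ponens. *)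

theory Defs
  imports Main
begin

datatype pfrm = PVar nat | PBot | PImp pfrm pfrm | PAnd pfrm pfrm | POr pfrm pfrm

definition PNeg :: "pfrm \<Rightarrow> pfrm" where "PNeg A = PImp A PBot"

primrec psubst :: "(nat \<Rightarrow> pfrm) \<Rightarrow> pfrm \<Rightarrow> pfrm" where
  "psubst \<sigma> (PVar n) = \<sigma> n"
| "psubst \<sigma> PBot = PBot"
| "psubst \<sigma> (PImp A B) = PImp (psubst \<sigma> A) (psubst \<sigma> B)"
| "psubst \<sigma> (PAnd A B) = PAnd (psubst \<sigma> A) (psubst \<sigma> B)"
| "psubst \<sigma> (POr A B) = POr (psubst \<sigma> A) (psubst \<sigma> B)"

inductive ipc :: "pfrm \<Rightarrow> bool" where
  K: "ipc (PImp A (PImp B A))"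
| S: "ipc (PImp (PImp A (PImp B C)) (PImp (PImp A B) (PImp A C)))"
| AndE1: "ipc (PImp (PAnd A B) A)"
| AndE2: "ipc (PImp (PAnd A B) B)"
| AndI: "ipc (PImp A (PImp B (PAnd A B)))"
| OrI1: "ipc (PImp A (POr A B))"
| OrI2: "ipc (PImp B (POr A B))"
| OrE: "ipc (PImp (PImp A C) (PImp (PImp B C) (PImp (POr A B) C)))"
| EFQ: "ipc (PImp PBot A)"
| MP: "ipc (PImp A B) \<Longrightarrow> ipc A \<Longrightarrow> ipc B"

primrec peval :: "(nat \<Rightarrow> bool) \<Rightarrow> pfrm \<Rightarrow> bool" where
  "peval v (PVar n) = v n"
| "peval v PBot = False"
| "peval v (PImp A B) = (peval v A \<longrightarrow> peval v B)"
| "peval v (PAnd A B) = (peval v A \<and> peval v B)"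
| "peval v (POr A B) = (peval v A \<or> peval v B)"

definition tautology :: "pfrm \<Rightarrow> bool" where
  "tautology A \<longleftrightarrow> (\<forall>v. peval v A)"

definition intermediate_logic :: "pfrm set \<Rightarrow> bool" where
  "intermediate_logic L \<longleftrightarrow>
     (\<forall>A. ipc A \<longrightarrow> A \<in> L) \<and>
     (\<forall>A\<in>L. tautology A) \<and>
     (\<forall>A B. PImp A B \<in> L \<longrightarrow> A \<in> L \<longrightarrow> B \<in> L) \<and>
     (\<forall>\<sigma> A. A \<in> L \<longrightarrow> psubst \<sigma> A \<in> L)"

section \<open>Quantifier-free language with epsilon/tau terms (locally nameless, de Bruijn bound variables)\<close>

datatype trm = BVar nat | FVar nat | Fn nat "trm list" | Eps frm | Tau frm
     and frm = Pred nat "trm list" | Bot | Imp frm frm | And frm frm | Or frm frm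

definition Neg :: "frm \<Rightarrow> frm" where "Neg A = Imp A Bot"

text \<open>Local closedness (well-formedness): no dangling bound variables.
  In \<open>Eps A\<close> / \<open>Tau A\<close> the bound variable of the binder is index 0 of \<open>A\<close>.\<close>
primrec lcT :: "nat \<Rightarrow> trm \<Rightarrow> bool" and lcF :: "nat \<Rightarrow> frm \<Rightarrow> bool" where
  "lcT d (BVar k) = (k < d)"
| "lcT d (FVar x) = True"
| "lcT d (Fn f ts) = list_all (lcT d) ts"
| "lcT d (Eps A) = lcF (Suc d) A"
| "lcT d (Tau A) = lcF (Suc d) A"
| "lcF d (Pred p ts) = list_all (lcT d) ts"
| "lcF d Bot = True"
| "lcF d (Imp A B) = (lcF d A \<and> lcF d B)"
| "lcF d (And A B) = (lcF d A \<and> lcF d B)"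
| "lcF d (Or A B) = (lcF d A \<and> lcF d B)"

primrec instT :: "nat \<Rightarrow> trm \<Rightarrow> trm \<Rightarrow> trm" and instF :: "nat \<Rightarrow> trm \<Rightarrow> frm \<Rightarrow> frm" where
  "instT d t (BVar k) = (if k = d then t else BVar k)"
| "instT d t (FVar x) = FVar x"
| "instT d t (Fn f ts) = Fn f (map (instT d t) ts)"
| "instT d t (Eps A) = Eps (instF (Suc d) t A)"
| "instT d t (Tau A) = Tau (instF (Suc d) t A)"
| "instF d t (Pred p ts) = Pred p (map (instT d t) ts)"
| "instF d t Bot = Bot"
| "instF d t (Imp A B) = Imp (instF d t A) (instF d t B)"
| "instF d t (And A B) = And (instF d t A) (instF d t B)"
| "instF d t (Or A B) = Or (instF d t A) (instF d t B)"

abbreviation app :: "frm \<Rightarrow> trm \<Rightarrow> frm" where "app A t \<equiv> instF 0 t A"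

primrec replT :: "trm \<Rightarrow> trm \<Rightarrow> trm \<Rightarrow> trm" and replF :: "trm \<Rightarrow> trm \<Rightarrow> frm \<Rightarrow> frm" where
  "replT e s (BVar k) = (if BVar k = e then s else BVar k)"
| "replT e s (FVar x) = (if FVar x = e then s else FVar x)"
| "replT e s (Fn f ts) = (if Fn f ts = e then s else Fn f (map (replT e s) ts))"
| "replT e s (Eps A) = (if Eps A = e then s else Eps (replF e s A))"
| "replT e s (Tau A) = (if Tau A = e then s else Tau (replF e s A))"
| "replF e s (Pred p ts) = Pred p (map (replT e s) ts)"
| "replF e s Bot = Bot"
| "replF e s (Imp A B) = Imp (replF e s A) (replF e s B)"
| "replF e s (And A B) = And (replF e s A) (replF e s B)"
| "replF e s (Or A B) = Or (replF e s A) (replF e s B)"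

primrec inst_prop :: "(nat \<Rightarrow> frm) \<Rightarrow> pfrm \<Rightarrow> frm" where
  "inst_prop \<sigma> (PVar n) = \<sigma> n"
| "inst_prop \<sigma> PBot = Bot"
| "inst_prop \<sigma> (PImp A B) = Imp (inst_prop \<sigma> A) (inst_prop \<sigma> B)"
| "inst_prop \<sigma> (PAnd A B) = And (inst_prop \<sigma> A) (inst_prop \<sigma> B)"
| "inst_prop \<sigma> (POr A B) = Or (inst_prop \<sigma> A) (inst_prop \<sigma> B)"

definition L_instance :: "pfrm set \<Rightarrow> frm \<Rightarrow> bool" where
  "L_instance L F \<longleftrightarrow> (\<exists>P \<sigma>. P \<in> L \<and> (\<forall>n. lcF 0 (\<sigma> n)) \<and> F = inst_prop \<sigma> P)"

definition belongs :: "frm \<Rightarrow> trm \<Rightarrow> bool" where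
  "belongs F e \<longleftrightarrow>
     (\<exists>A t. e = Eps A \<and> lcT 0 e \<and> lcT 0 t \<and> F = Imp (app A t) (app A (Eps A))) \<or>
     (\<exists>A t. e = Tau A \<and> lcT 0 e \<and> lcT 0 t \<and> F = Imp (app A (Tau A)) (app A t))"

definition critical :: "frm \<Rightarrow> bool" where
  "critical F \<longleftrightarrow> (\<exists>e. belongs F e)"

datatype just = JCrit | JInst | JMP nat nat

text \<open>A derivation is a nonempty list of lines (formula, justification): a critical formula,
  a substitution instance of a theorem of L, or modus ponens from two earlier lines
  (line j is \<open>line i \<longrightarrow> this line\<close>).\<close>
definition derivation :: "pfrm set \<Rightarrow> (frm \<times> just) list \<Rightarrow> bool" where
  "derivation L \<pi> \<longleftrightarrow> \<pi> \<noteq> [] \<and>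
     (\<forall>k < length \<pi>. case snd (\<pi> ! k) of
         JCrit \<Rightarrow> critical (fst (\<pi> ! k))
       | JInst \<Rightarrow> L_instance L (fst (\<pi> ! k))
       | JMP i j \<Rightarrow> i < k \<and> j < k \<and> fst (\<pi> ! j) = Imp (fst (\<pi> ! i)) (fst (\<pi> ! k)))"

definition end_formula :: "(frm \<times> just) list \<Rightarrow> frm" where
  "end_formula \<pi> = fst (last \<pi>)"

definition critical_formulas :: "(frm \<times> just) list \<Rightarrow> frm set" where
  "critical_formulas \<pi> = {fst (\<pi> ! k) |k. k < length \<pi> \<and> snd (\<pi> ! k) = JCrit}"

definition critical_terms :: "(frm \<times> just) list \<Rightarrow> trm set" where
  "critical_terms \<pi> = {e. \<exists>F\<in>critical_formulas \<pi>. belongs F e}"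

definition Gamma :: "(frm \<times> just) list \<Rightarrow> trm \<Rightarrow> frm set" where
  "Gamma \<pi> e = {F \<in> critical_formulas \<pi>. \<not> belongs F e}"

inductive derives :: "pfrm set \<Rightarrow> frm set \<Rightarrow> frm \<Rightarrow> bool" for L where
  Assm: "F \<in> H \<Longrightarrow> derives L H F"
| Inst: "L_instance L F \<Longrightarrow> derives L H F"
| MP: "derives L H (Imp F G) \<Longrightarrow> derives L H F \<Longrightarrow> derives L H G"

fun bigOr :: "frm list \<Rightarrow> frm" where
  "bigOr [] = Bot"
| "bigOr [F] = F"
| "bigOr (F # Fs) = Or F (bigOr Fs)"

definition complete_elim_set :: "pfrm set \<Rightarrow> (frm \<times> just) list \<Rightarrow> trm \<Rightarrow> trm list \<Rightarrow> bool" where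
  "complete_elim_set L \<pi> e ss \<longleftrightarrow> ss \<noteq> [] \<and> (\<forall>s\<in>set ss. lcT 0 s) \<and>
     derives L (\<Union>s\<in>set ss. replF e s ` Gamma \<pi> e)
       (bigOr (map (\<lambda>s. replF e s (end_formula \<pi>)) ss))"

end

theory Submission
  imports Defs
begin

text \<open>
  Let \<open>\<Lambda>(e)\<close> consist of the critical formulas \<open>F\<^sub>i\<close> of \<open>e\<close>, built from terms \<open>t\<^sub>i\<close>.
  To each \<open>F\<^sub>i\<close> attach a case formula \<open>C\<^sub>i\<close>: \<open>A(t\<^sub>i)\<close> if \<open>e = \<epsilon>x A(x)\<close>, and
  \<open>\<not>A(t\<^sub>i)\<close> if \<open>e = \<tau>x A(x)\<close>. Under \<open>C\<^sub>i\<close>, every formula of \<open>\<Lambda>(e)[t\<^sub>i/e]\<close> is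
  derivable, so replacing \<open>e\<close> by \<open>t\<^sub>i\<close> throughout \<open>\<pi>\<close> gives
  \<open>\<Gamma>[t\<^sub>i/e], C\<^sub>i \<turnstile> \<not>D[t\<^sub>i/e]\<close>. Because the conclusion is a negation, the hypothesis
  \<open>C\<^sub>i\<close> may be weakened to \<open>\<not>\<not>C\<^sub>i\<close>. Under \<open>\<not>C\<^sub>i\<close>, on the other hand, \<open>\<not>\<not>F\<^sub>i\<close>
  holds, so if every \<open>\<not>C\<^sub>i\<close> holds, then \<open>\<pi>\<close> itself gives \<open>\<Gamma>, \<not>C\<^sub>1, \<dots>, \<not>C\<^sub>n \<turnstile> \<not>D\<close>.
  Splitting on \<open>\<not>C\<^sub>i \<or> \<not>\<not>C\<^sub>i\<close> for each \<open>i\<close> combines these derivations into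
  \<open>\<Gamma>, \<Gamma>[t\<^sub>1/e], \<dots>, \<Gamma>[t\<^sub>n/e] \<turnstile> \<not>D \<or> \<not>D[t\<^sub>1/e] \<or> \<dots> \<or> \<not>D[t\<^sub>n/e]\<close>.
\<close>

section \<open>Instantiation, replacement and local closedness\<close>

lemma size_le_size_list_map:
  "u \<in> set ts \<Longrightarrow> size (f u) \<le> size_list size (map f ts)"
  by (rule size_list_estimation'[of "f u"]) auto

lemma map_neq_self_ex:
  "map f ts \<noteq> ts \<Longrightarrow> \<exists>u\<in>set ts. f u \<noteq> u"
  using map_idI by metis

lemma size_inst_changed:
  "instT d t u \<noteq> u \<Longrightarrow> size t \<le> size (instT d t u)"
  "instF d t B \<noteq> B \<Longrightarrow> size t \<le> size (instF d t B)"
proof (induction u and B arbitrary: d and d)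
  case (Fn f ts)
  then obtain u where "u \<in> set ts" "instT d t u \<noteq> u" by (auto dest: map_neq_self_ex)
  with Fn.IH show ?case using size_le_size_list_map[of u ts "instT d t"] by fastforce
next
  case (Pred p ts)
  then obtain u where "u \<in> set ts" "instT d t u \<noteq> u" by (auto dest: map_neq_self_ex)
  with Pred.IH show ?case using size_le_size_list_map[of u ts "instT d t"] by fastforce
next
  case (Eps A)
  show ?case using Eps.IH[of "Suc d"] Eps.prems by simp
next
  case (Tau A)
  show ?case using Tau.IH[of "Suc d"] Tau.prems by simp
next
  case (Imp A B)
  show ?case using Imp.IH[of d] Imp.prems by fastforce
next
  case (And A B)
  show ?case using And.IH[of d] And.prems by fastforce
next
  case (Or A B)
  show ?case using Or.IH[of d] Or.prems by fastforce
qed (auto split: if_splits)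

lemma size_inst_changed_less:
  assumes "instT d t u \<noteq> u" and "u \<noteq> BVar d"
  shows "size t < size (instT d t u)"
proof (cases u)
  case (Fn f ts)
  with assms(1) obtain v where "v \<in> set ts" "instT d t v \<noteq> v" by (auto dest: map_neq_self_ex)
  then show ?thesis
    using Fn size_inst_changed(1)[of d t v] size_le_size_list_map[of v ts "instT d t"] by simp
next
  case (Eps A)
  with assms(1) show ?thesis using size_inst_changed(2)[of "Suc d" t A] by simp
next
  case (Tau A)
  with assms(1) show ?thesis using size_inst_changed(2)[of "Suc d" t A] by simp
qed (use assms in auto)

lemma instT_neq_self:
  assumes "size u < size t" and "u \<noteq> BVar d"
  shows "instT d t u \<noteq> t"
  using assms size_inst_changed_less[of d t u] by (cases "instT d t u = u") auto

lemma replT_self [simp]: "replT e s e = s"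
  by (cases e) auto

text \<open>As \<open>u\<close> is smaller than \<open>e\<close>, the only occurrences of \<open>e\<close> in \<open>u[e]\<close> are
  the instantiated ones.\<close>

lemma repl_inst_self:
  "size u < size e \<Longrightarrow> replT e s (instT d e u) = instT d s u"
  "size B < size e \<Longrightarrow> replF e s (instF d e B) = instF d s B"
proof (induction u and B arbitrary: d and d)
  case (Fn f ts)
  have "instT d e (Fn f ts) \<noteq> e" by (rule instT_neq_self) (use Fn.prems in auto)
  moreover have "size u < size e" if "u \<in> set ts" for u
    using Fn.prems size_le_size_list_map[OF that, of id] by simp
  ultimately show ?case using Fn.IH by simp
next
  case (Eps A)
  have "instT d e (Eps A) \<noteq> e" by (rule instT_neq_self) (use Eps.prems in auto)
  then show ?case using Eps.IH Eps.prems by simp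
next
  case (Tau A)
  have "instT d e (Tau A) \<noteq> e" by (rule instT_neq_self) (use Tau.prems in auto)
  then show ?case using Tau.IH Tau.prems by simp
next
  case (Pred p ts)
  have "size u < size e" if "u \<in> set ts" for u
    using Pred.prems size_le_size_list_map[OF that, of id] by simp
  then show ?case using Pred.IH by simp
qed auto

lemma replF_app_self: "size A < size e \<Longrightarrow> replF e s (app A e) = app A s"
  by (rule repl_inst_self(2))

lemma repl_self: "replT e e u = u" "replF e e B = B"
  by (induction u and B) (auto simp: map_idI)

lemma replF_Neg [simp]: "replF e s (Neg A) = Neg (replF e s A)"
  by (simp add: Neg_def)

lemma lc_mono:
  "lcT d u \<Longrightarrow> d \<le> d' \<Longrightarrow> lcT d' u"
  "lcF d B \<Longrightarrow> d \<le> d' \<Longrightarrow> lcF d' B"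
  by (induction u and B arbitrary: d d' and d d') (auto simp: list_all_iff)

lemma lc_repl:
  "lcT d u \<Longrightarrow> lcT 0 s \<Longrightarrow> lcT d (replT e s u)"
  "lcF d B \<Longrightarrow> lcT 0 s \<Longrightarrow> lcF d (replF e s B)"
  by (induction u and B arbitrary: d and d) (auto simp: list_all_iff intro: lc_mono)

lemma lc_inst:
  "lcT (Suc d) u \<Longrightarrow> lcT 0 t \<Longrightarrow> lcT d (instT d t u)"
  "lcF (Suc d) B \<Longrightarrow> lcT 0 t \<Longrightarrow> lcF d (instF d t B)"
  by (induction u and B arbitrary: d and d) (auto simp: list_all_iff intro: lc_mono)

lemma lc_Neg [simp]: "lcF d (Neg A) = lcF d A"
  by (simp add: Neg_def)

lemma lc_inst_prop: "\<forall>n. lcF 0 (\<sigma> n) \<Longrightarrow> lcF 0 (inst_prop \<sigma> P)"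
  by (induction P) auto

lemma repl_inst_prop: "replF e s (inst_prop \<sigma> P) = inst_prop (\<lambda>n. replF e s (\<sigma> n)) P"
  by (induction P) auto

lemma L_instance_lc: "L_instance L F \<Longrightarrow> lcF 0 F"
  unfolding L_instance_def using lc_inst_prop by blast

lemma L_instance_repl: "L_instance L F \<Longrightarrow> lcT 0 s \<Longrightarrow> L_instance L (replF e s F)"
  unfolding L_instance_def using repl_inst_prop lc_repl(2) by metis

lemma belongs_lc: "belongs F e \<Longrightarrow> lcF 0 F"
  unfolding belongs_def by (auto intro!: lc_inst(2))

section \<open>Derivability from hypotheses\<close>

lemma derives_lc: "derives L H F \<Longrightarrow> \<forall>h\<in>H. lcF 0 h \<Longrightarrow> lcF 0 F"
  by (induction rule: derives.induct) (auto dest: L_instance_lc)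

lemma derives_mono: "derives L H F \<Longrightarrow> H \<subseteq> H' \<Longrightarrow> derives L H' F"
  by (induction rule: derives.induct) (auto intro: derives.intros)

lemma derives_repl: "derives L H F \<Longrightarrow> lcT 0 s \<Longrightarrow> derives L (replF e s ` H) (replF e s F)"
  by (induction rule: derives.induct) (auto intro: derives.intros L_instance_repl)

lemma derives_cut:
  "derives L H' F \<Longrightarrow> H' \<subseteq> H \<union> S \<Longrightarrow> \<forall>G\<in>S. derives L H G \<Longrightarrow> derives L H F"
  by (induction rule: derives.induct) (auto intro: derives.intros)

lemma derives_NegE: "derives L H (Neg A) \<Longrightarrow> derives L H A \<Longrightarrow> derives L H Bot"
  unfolding Neg_def by (rule derives.MP)

lemma derives_assm_insert [simp]: "derives L (insert F H) F"
  by (rule derives.Assm) simp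

locale ipc_extension =
  fixes L :: "pfrm set"
  assumes ipc_in_L: "ipc P \<Longrightarrow> P \<in> L"
begin

lemma derives_ipc_instance: "ipc P \<Longrightarrow> \<forall>n. lcF 0 (\<sigma> n) \<Longrightarrow> derives L H (inst_prop \<sigma> P)"
  by (rule derives.Inst) (auto simp: L_instance_def intro: ipc_in_L)

lemma derives_K: "lcF 0 A \<Longrightarrow> lcF 0 B \<Longrightarrow> derives L H (Imp A (Imp B A))"
  using derives_ipc_instance[OF ipc.K[of "PVar 0" "PVar 1"], of "\<lambda>n. if n = 0 then A else B"]
  by simp

lemma derives_S:
  "lcF 0 A \<Longrightarrow> lcF 0 B \<Longrightarrow> lcF 0 C \<Longrightarrow>
    derives L H (Imp (Imp A (Imp B C)) (Imp (Imp A B) (Imp A C)))"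
  using derives_ipc_instance[OF ipc.S[of "PVar 0" "PVar 1" "PVar 2"],
      of "\<lambda>n. if n = 0 then A else if n = 1 then B else C"]
  by simp

lemma derives_OrI1: "lcF 0 A \<Longrightarrow> lcF 0 B \<Longrightarrow> derives L H (Imp A (Or A B))"
  using derives_ipc_instance[OF ipc.OrI1[of "PVar 0" "PVar 1"], of "\<lambda>n. if n = 0 then A else B"]
  by simp

lemma derives_OrI2: "lcF 0 A \<Longrightarrow> lcF 0 B \<Longrightarrow> derives L H (Imp B (Or A B))"
  using derives_ipc_instance[OF ipc.OrI2[of "PVar 1" "PVar 0"], of "\<lambda>n. if n = 0 then A else B"]
  by simp

lemma derives_OrE:
  "lcF 0 A \<Longrightarrow> lcF 0 B \<Longrightarrow> lcF 0 C \<Longrightarrow>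
    derives L H (Imp (Imp A C) (Imp (Imp B C) (Imp (Or A B) C)))"
  using derives_ipc_instance[OF ipc.OrE[of "PVar 0" "PVar 2" "PVar 1"],
      of "\<lambda>n. if n = 0 then A else if n = 1 then B else C"]
  by simp

lemma derives_EFQ: "lcF 0 A \<Longrightarrow> derives L H (Imp Bot A)"
  using derives_ipc_instance[OF ipc.EFQ[of "PVar 0"], of "\<lambda>n. A"] by simp

lemma derives_imp_refl: "lcF 0 A \<Longrightarrow> derives L H (Imp A A)"
  using derives_S[of A "Imp A A" A H] derives_K[of A "Imp A A" H] derives_K[of A A H]
  by (auto intro: derives.MP)

text \<open>Axiom instances must be locally closed, so the deduction theorem, and everything built
  on it, needs closed hypotheses.\<close>

theorem deduction:
  assumes "derives L (insert A H) B" and "lcF 0 A" and "\<forall>h\<in>H. lcF 0 h"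
  shows "derives L H (Imp A B)"
  using assms
proof (induction "insert A H" B rule: derives.induct)
  case (Assm F)
  then show ?case
    by (cases "F = A") (auto intro: derives_imp_refl derives.MP[OF derives_K] derives.Assm)
next
  case (Inst F)
  then show ?case by (auto intro: derives.MP[OF derives_K] derives.Inst L_instance_lc)
next
  case (MP F G)
  then have "lcF 0 (Imp F G)" using derives_lc[of L "insert A H"] by blast
  with MP show ?case using derives_S[of A F G H] by (auto intro: derives.MP)
qed

lemma derives_disjE:
  assumes "\<forall>h\<in>H. lcF 0 h" and "lcF 0 A" "lcF 0 B" "lcF 0 C"
    and "derives L H (Or A B)" "derives L (insert A H) C" "derives L (insert B H) C"
  shows "derives L H C"
  using assms derives_OrE[of A B C H] deduction[of A H C] deduction[of B H C]
  by (meson derives.MP)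

lemma lc_bigOr: "\<forall>F\<in>set Fs. lcF 0 F \<Longrightarrow> lcF 0 (bigOr Fs)"
  by (induction Fs rule: bigOr.induct) auto

lemma derives_bigOr_intro:
  "F \<in> set Fs \<Longrightarrow> \<forall>G\<in>set Fs. lcF 0 G \<Longrightarrow> derives L H F \<Longrightarrow> derives L H (bigOr Fs)"
proof (induction Fs rule: bigOr.induct)
  case (3 G G' Fs)
  then have "lcF 0 G" "lcF 0 (bigOr (G' # Fs))" using lc_bigOr[of "G' # Fs"] by auto
  note disjI = derives_OrI1[OF this] derives_OrI2[OF this]
  show ?case
    using 3 disjI[of H] by (cases "F = G") (auto intro: derives.MP)
qed auto

lemma derives_bigOr_elim:
  "\<forall>h\<in>H. lcF 0 h \<Longrightarrow> lcF 0 C \<Longrightarrow> \<forall>F\<in>set Fs. lcF 0 F \<and> derives L (insert F H) C \<Longrightarrow>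
    derives L (insert (bigOr Fs) H) C"
proof (induction Fs rule: bigOr.induct)
  case 1
  then show ?case using derives_EFQ[of C "insert Bot H"] by (auto intro: derives.MP)
next
  case (3 F G Fs)
  let ?B = "bigOr (G # Fs)"
  have lc: "lcF 0 F" "lcF 0 ?B" using 3 lc_bigOr[of "G # Fs"] by auto
  have "derives L (insert ?B H) C" using 3 by simp
  then show ?case
    using 3 lc by (auto intro: derives_disjE[OF _ lc] derives_mono)
qed simp

lemma derives_bigOr_mono:
  assumes "\<forall>h\<in>H. lcF 0 h" and "\<forall>G\<in>set Gs. lcF 0 G" and "set Fs \<subseteq> set Gs"
    and "derives L H (bigOr Fs)"
  shows "derives L H (bigOr Gs)"
proof -
  have "derives L (insert (bigOr Fs) H) (bigOr Gs)"
    using assms(1-3) by (intro derives_bigOr_elim) (auto intro: lc_bigOr derives_bigOr_intro)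
  with assms(4) show ?thesis by (auto intro: derives_cut[of _ "insert (bigOr Fs) H" _ H "{bigOr Fs}"])
qed

lemma derives_NegI:
  "derives L (insert A H) Bot \<Longrightarrow> lcF 0 A \<Longrightarrow> \<forall>h\<in>H. lcF 0 h \<Longrightarrow> derives L H (Neg A)"
  unfolding Neg_def by (rule deduction)

lemma derives_double_neg_intro:
  assumes "\<forall>h\<in>H. lcF 0 h" and "lcF 0 F" and "derives L H F"
  shows "derives L H (Neg (Neg F))"
proof (rule derives_NegI)
  show "derives L (insert (Neg F) H) Bot"
    by (rule derives_NegE[where A = F]) (auto intro: derives_mono[OF assms(3)])
qed (use assms in auto)

lemma derives_imp_if_Neg:
  assumes "\<forall>h\<in>H. lcF 0 h" and "lcF 0 X" "lcF 0 Y" and "derives L H (Neg X)"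
  shows "derives L H (Imp X Y)"
proof (rule deduction)
  have "derives L (insert X H) Bot"
    by (rule derives_NegE[where A = X]) (auto intro: derives_mono[OF assms(4)])
  then show "derives L (insert X H) Y"
    using derives_EFQ[OF assms(3)] by (rule derives.MP[rotated])
qed (use assms in auto)

lemma derives_double_neg_imp:
  assumes "\<forall>h\<in>H. lcF 0 h" and "lcF 0 X" "lcF 0 Y" and "derives L H (Neg (Neg X))"
  shows "derives L H (Neg (Neg (Imp Y X)))"
proof (rule derives_NegI)
  let ?H = "insert (Neg (Imp Y X)) H"
  have "derives L (insert X ?H) (Imp Y X)"
    using derives_K[OF assms(2,3)] by (rule derives.MP) simp
  then have "derives L (insert X ?H) Bot"
    by (rule derives_NegE[rotated]) (auto intro: derives.Assm)
  then have "derives L ?H (Neg X)"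
    using assms by (auto intro: derives_NegI)
  then show "derives L ?H Bot"
    by (rule derives_NegE[rotated]) (auto intro: derives_mono[OF assms(4)])
qed (use assms in auto)

lemma derives_Neg_cut_double_neg:
  assumes "\<forall>h\<in>H. lcF 0 h" and "lcF 0 X" "lcF 0 Z"
    and "derives L (insert X H) (Neg Z)" and "derives L H (Neg (Neg X))"
  shows "derives L H (Neg Z)"
proof (rule derives_NegI)
  have "derives L (insert X (insert Z H)) Bot"
    by (rule derives_NegE[where A = Z]) (auto intro: derives_mono[OF assms(4)] derives.Assm)
  then have "derives L (insert Z H) (Neg X)"
    using assms by (auto intro: derives_NegI)
  then show "derives L (insert Z H) Bot"
    by (rule derives_NegE[rotated]) (auto intro: derives_mono[OF assms(5)])
qed (use assms in auto)

lemma derives_Neg_cut_double_negs: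
  assumes "finite S" and "derives L (H \<union> S) (Neg Z)"
    and "\<forall>F\<in>S. lcF 0 F \<and> derives L H (Neg (Neg F))" and "\<forall>h\<in>H. lcF 0 h" and "lcF 0 Z"
  shows "derives L H (Neg Z)"
  using assms
proof (induction S arbitrary: H)
  case (insert F S)
  have "derives L (insert F H) (Neg Z)"
    by (rule insert.IH) (use insert.prems in \<open>auto intro: derives_mono\<close>)
  with insert.prems show ?case
    by (auto intro: derives_Neg_cut_double_neg)
qed simp

end

locale kc_extension = ipc_extension +
  assumes weak_excluded_middle: "POr (PNeg A) (PNeg (PNeg A)) \<in> L"
begin

lemma derives_weak_excluded_middle:
  assumes "lcF 0 A"
  shows "derives L H (Or (Neg A) (Neg (Neg A)))"
proof -
  have "L_instance L (inst_prop (\<lambda>n. A) (POr (PNeg (PVar 0)) (PNeg (PNeg (PVar 0)))))"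
    unfolding L_instance_def using weak_excluded_middle assms by (intro exI conjI) auto
  then have "derives L H (inst_prop (\<lambda>n. A) (POr (PNeg (PVar 0)) (PNeg (PNeg (PVar 0)))))"
    by (rule derives.Inst)
  then show ?thesis
    by (simp add: PNeg_def Neg_def)
qed

lemma derives_bigOr_by_weak_excluded_middle:
  assumes "\<forall>h\<in>H. lcF 0 h" and "lcF 0 G\<^sub>0"
    and "\<forall>F\<in>set Fs. lcF 0 (C F) \<and> lcF 0 (G F) \<and> derives L (insert (Neg (Neg (C F))) H) (G F)"
    and "derives L (H \<union> (\<lambda>F. Neg (C F)) ` set Fs) G\<^sub>0"
  shows "derives L H (bigOr (G\<^sub>0 # map G Fs))"
  using assms
proof (induction Fs arbitrary: H)
  case (Cons F Fs)
  let ?goal = "bigOr (G\<^sub>0 # G F # map G Fs)"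
  have lc: "lcF 0 (C F)" "\<forall>A\<in>set (G\<^sub>0 # G F # map G Fs). lcF 0 A"
    using Cons.prems by auto
  have "derives L (insert (Neg (C F)) H) (bigOr (G\<^sub>0 # map G Fs))"
    by (rule Cons.IH) (use Cons.prems lc in \<open>auto intro: derives_mono\<close>)
  then have neg_case: "derives L (insert (Neg (C F)) H) ?goal"
    by (rule derives_bigOr_mono[rotated 3]) (use Cons.prems lc in auto)
  have double_neg_case: "derives L (insert (Neg (Neg (C F))) H) ?goal"
    by (rule derives_bigOr_intro[where F = "G F"]) (use Cons.prems lc in auto)
  show ?case
  proof (rule derives_disjE)
    show "derives L H (Or (Neg (C F)) (Neg (Neg (C F))))"
      using lc(1) by (rule derives_weak_excluded_middle)
  qed (use Cons.prems(1) lc neg_case double_neg_case lc_bigOr in simp_all)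
qed simp

end

section \<open>Eliminating a critical term\<close>

definition Lambda :: "(frm \<times> just) list \<Rightarrow> trm \<Rightarrow> frm set" where
  "Lambda \<pi> e = {F \<in> critical_formulas \<pi>. belongs F e}"

lemma critical_formulas_eq_Gamma_Un_Lambda: "critical_formulas \<pi> = Gamma \<pi> e \<union> Lambda \<pi> e"
  unfolding Gamma_def Lambda_def by blast

lemma finite_critical_formulas: "finite (critical_formulas \<pi>)"
  unfolding critical_formulas_def by simp

lemma finite_Lambda: "finite (Lambda \<pi> e)"
  using finite_critical_formulas unfolding Lambda_def by simp

lemma lc_critical_formula: "derivation L \<pi> \<Longrightarrow> F \<in> critical_formulas \<pi> \<Longrightarrow> lcF 0 F"
  unfolding critical_formulas_def derivation_def critical_def by (fastforce intro: belongs_lc)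

lemma derives_derivation_line:
  assumes "derivation L \<pi>" and "k < length \<pi>"
  shows "derives L (critical_formulas \<pi>) (fst (\<pi> ! k))"
  using assms(2)
proof (induction k rule: less_induct)
  case (less k)
  with assms(1) have line: "case snd (\<pi> ! k) of
       JCrit \<Rightarrow> critical (fst (\<pi> ! k))
     | JInst \<Rightarrow> L_instance L (fst (\<pi> ! k))
     | JMP i j \<Rightarrow> i < k \<and> j < k \<and> fst (\<pi> ! j) = Imp (fst (\<pi> ! i)) (fst (\<pi> ! k))"
    unfolding derivation_def by blast
  show ?case
  proof (cases "snd (\<pi> ! k)")
    case JCrit
    with less.prems show ?thesis
      unfolding critical_formulas_def by (blast intro: derives.Assm)
  next
    case JInst
    with line show ?thesis by (auto intro: derives.Inst)
  next
    case (JMP i j)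
    with line less.IH[of i] less.IH[of j] less.prems show ?thesis
      by (auto intro: derives.MP)
  qed
qed

lemma derives_end_formula: "derivation L \<pi> \<Longrightarrow> derives L (critical_formulas \<pi>) (end_formula \<pi>)"
  unfolding end_formula_def derivation_def
  by (auto simp: last_conv_nth intro: derives_derivation_line[unfolded derivation_def])

lemma lc_end_formula: "derivation L \<pi> \<Longrightarrow> lcF 0 (end_formula \<pi>)"
  using derives_lc[OF derives_end_formula] lc_critical_formula by blast

lemma lc_repl_Gamma:
  "derivation L \<pi> \<Longrightarrow> lcT 0 s \<Longrightarrow> F \<in> Gamma \<pi> e \<Longrightarrow> lcF 0 (replF e s F)"
  unfolding Gamma_def by (auto intro: lc_repl(2) lc_critical_formula)

text \<open>\<open>T F\<close> is the term \<open>t\<^sub>i\<close> substituted for \<open>e\<close> and \<open>C F\<close> the case formula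
  \<open>C\<^sub>i\<close> belonging to the critical formula \<open>F = F\<^sub>i\<close>.\<close>

definition elimination_witnesses ::
    "pfrm set \<Rightarrow> frm set \<Rightarrow> trm \<Rightarrow> (frm \<Rightarrow> trm) \<Rightarrow> (frm \<Rightarrow> frm) \<Rightarrow> bool" where
  "elimination_witnesses L \<Lambda> e T C \<longleftrightarrow>
     (\<forall>F\<in>\<Lambda>. lcT 0 (T F) \<and> lcF 0 (C F) \<and> derives L {Neg (C F)} (Neg (Neg F)) \<and>
        (\<forall>F'\<in>\<Lambda>. derives L {C F} (replF e (T F) F')))"

context ipc_extension
begin

lemma elimination_witnesses_Eps:
  assumes e: "e = Eps A" "lcT 0 e"
    and \<Lambda>: "\<forall>F\<in>\<Lambda>. lcT 0 (T F) \<and> F = Imp (app A (T F)) (app A e)"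
  shows "elimination_witnesses L \<Lambda> e T (\<lambda>F. app A (T F))"
  unfolding elimination_witnesses_def
proof (intro ballI conjI)
  have lc_app: "lcF 0 (app A t)" if "lcT 0 t" for t
    using e that by (auto intro: lc_inst(2))
  fix F assume "F \<in> \<Lambda>"
  define t where "t = T F"
  with \<Lambda> \<open>F \<in> \<Lambda>\<close> have t: "lcT 0 t" "lcF 0 (app A t)" and F: "F = Imp (app A t) (app A e)"
    using lc_app by auto
  then show "lcT 0 (T F)" "lcF 0 (app A (T F))" unfolding t_def by auto
  have "derives L {Neg (app A t)} F"
    unfolding F using t e(2) lc_app by (auto intro: derives_imp_if_Neg derives.Assm)
  then show "derives L {Neg (app A (T F))} (Neg (Neg F))"
    unfolding t_def[symmetric] using t e(2) F lc_app by (auto intro: derives_double_neg_intro)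
  fix F' assume "F' \<in> \<Lambda>"
  define t' where "t' = T F'"
  with \<Lambda> \<open>F' \<in> \<Lambda>\<close> have t': "lcT 0 t'" and F': "F' = Imp (app A t') (app A e)" by auto
  have "replF e t F' = Imp (replF e t (app A t')) (app A t)"
    unfolding F' using e(1) replF_app_self[of A e t] by simp
  moreover have "lcF 0 (replF e t (app A t'))"
    using t t' lc_app by (auto intro: lc_repl(2))
  ultimately show "derives L {app A (T F)} (replF e (T F) F')"
    unfolding t_def[symmetric] using t by (auto intro: derives.MP[OF derives_K] derives.Assm)
qed

lemma elimination_witnesses_Tau:
  assumes e: "e = Tau A" "lcT 0 e"
    and \<Lambda>: "\<forall>F\<in>\<Lambda>. lcT 0 (T F) \<and> F = Imp (app A e) (app A (T F))"
  shows "elimination_witnesses L \<Lambda> e T (\<lambda>F. Neg (app A (T F)))"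
  unfolding elimination_witnesses_def
proof (intro ballI conjI)
  have lc_app: "lcF 0 (app A t)" if "lcT 0 t" for t
    using e that by (auto intro: lc_inst(2))
  fix F assume "F \<in> \<Lambda>"
  define t where "t = T F"
  with \<Lambda> \<open>F \<in> \<Lambda>\<close> have t: "lcT 0 t" "lcF 0 (app A t)" and F: "F = Imp (app A e) (app A t)"
    using lc_app by auto
  then show "lcT 0 (T F)" "lcF 0 (Neg (app A (T F)))" unfolding t_def by auto
  have "derives L {Neg (Neg (app A t))} (Neg (Neg F))"
    unfolding F using t e(2) lc_app by (auto intro: derives_double_neg_imp derives.Assm)
  then show "derives L {Neg (Neg (app A (T F)))} (Neg (Neg F))"
    unfolding t_def .
  fix F' assume "F' \<in> \<Lambda>"
  define t' where "t' = T F'"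
  with \<Lambda> \<open>F' \<in> \<Lambda>\<close> have t': "lcT 0 t'" and F': "F' = Imp (app A e) (app A t')" by auto
  have "replF e t F' = Imp (app A t) (replF e t (app A t'))"
    unfolding F' using e(1) replF_app_self[of A e t] by simp
  moreover have "lcF 0 (replF e t (app A t'))"
    using t t' lc_app by (auto intro: lc_repl(2))
  ultimately show "derives L {Neg (app A (T F))} (replF e (T F) F')"
    unfolding t_def[symmetric] using t by (auto intro: derives_imp_if_Neg derives.Assm)
qed

lemma elimination_witnesses_exist:
  assumes "\<forall>F\<in>\<Lambda>. belongs F e"
  shows "\<exists>T C. elimination_witnesses L \<Lambda> e T C"
proof (cases "\<Lambda> = {}")
  case True
  then show ?thesis unfolding elimination_witnesses_def by blast
next
  case False
  with assms obtain A where e: "e = Eps A \<or> e = Tau A" "lcT 0 e"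
    unfolding belongs_def by blast
  show ?thesis
  proof (cases "e = Eps A")
    case True
    with assms have "\<forall>F\<in>\<Lambda>. \<exists>t. lcT 0 t \<and> F = Imp (app A t) (app A e)"
      unfolding belongs_def by auto
    then obtain T where "\<forall>F\<in>\<Lambda>. lcT 0 (T F) \<and> F = Imp (app A (T F)) (app A e)"
      by metis
    with True e(2) show ?thesis by (blast intro: elimination_witnesses_Eps)
  next
    case False
    with e have Tau: "e = Tau A" by blast
    with assms have "\<forall>F\<in>\<Lambda>. \<exists>t. lcT 0 t \<and> F = Imp (app A e) (app A t)"
      unfolding belongs_def by auto
    then obtain T where "\<forall>F\<in>\<Lambda>. lcT 0 (T F) \<and> F = Imp (app A e) (app A (T F))"
      by metis
    with Tau e(2) show ?thesis by (blast intro: elimination_witnesses_Tau)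
  qed
qed

lemma derives_end_formula_under_double_neg_case:
  assumes \<pi>: "derivation L \<pi>" "end_formula \<pi> = Neg D" and "lcT 0 t" "lcF 0 C"
    and C: "\<forall>F\<in>Lambda \<pi> e. derives L {C} (replF e t F)"
  shows "derives L (insert (Neg (Neg C)) (replF e t ` Gamma \<pi> e)) (Neg (replF e t D))"
proof -
  let ?\<Gamma> = "replF e t ` Gamma \<pi> e"
  have lc_\<Gamma>: "\<forall>h\<in>?\<Gamma>. lcF 0 h"
    using \<pi>(1) \<open>lcT 0 t\<close> by (auto intro: lc_repl_Gamma)
  have "derives L (insert C ?\<Gamma>) (Neg (replF e t D))"
  proof (rule derives_cut)
    show "derives L (replF e t ` critical_formulas \<pi>) (Neg (replF e t D))"
      using derives_repl[OF derives_end_formula[OF \<pi>(1)] \<open>lcT 0 t\<close>] \<pi>(2) by simp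
    show "replF e t ` critical_formulas \<pi> \<subseteq> insert C ?\<Gamma> \<union> replF e t ` Lambda \<pi> e"
      unfolding critical_formulas_eq_Gamma_Un_Lambda[of \<pi> e] by blast
    show "\<forall>G\<in>replF e t ` Lambda \<pi> e. derives L (insert C ?\<Gamma>) G"
      using C by (auto intro: derives_mono)
  qed
  moreover have "lcF 0 (replF e t D)"
    using derives_lc[OF calculation] lc_\<Gamma> \<open>lcF 0 C\<close> by auto
  ultimately show ?thesis
    using lc_\<Gamma> \<open>lcF 0 C\<close>
    by (auto intro: derives_Neg_cut_double_neg[where X = C] derives_mono derives.Assm)
qed

lemma derives_end_formula_under_neg_cases:
  assumes \<pi>: "derivation L \<pi>" "end_formula \<pi> = Neg D"
    and C: "\<forall>F\<in>Lambda \<pi> e. lcF 0 (C F) \<and> derives L {Neg (C F)} (Neg (Neg F))"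
  shows "derives L (Gamma \<pi> e \<union> (\<lambda>F. Neg (C F)) ` Lambda \<pi> e) (Neg D)"
proof (rule derives_Neg_cut_double_negs)
  show "derives L (Gamma \<pi> e \<union> (\<lambda>F. Neg (C F)) ` Lambda \<pi> e \<union> Lambda \<pi> e) (Neg D)"
    using derives_end_formula[OF \<pi>(1)] unfolding \<pi>(2)
    by (rule derives_mono) (auto simp: critical_formulas_eq_Gamma_Un_Lambda[of \<pi> e])
  show "\<forall>h\<in>Gamma \<pi> e \<union> (\<lambda>F. Neg (C F)) ` Lambda \<pi> e. lcF 0 h"
    using C \<pi>(1) unfolding Gamma_def by (auto intro: lc_critical_formula)
  show "finite (Lambda \<pi> e)"
    by (rule finite_Lambda)
  show "\<forall>F\<in>Lambda \<pi> e. lcF 0 F \<and> derives L (Gamma \<pi> e \<union> (\<lambda>F. Neg (C F)) ` Lambda \<pi> e) (Neg (Neg F))"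
    using C \<pi>(1) unfolding Lambda_def by (auto intro: lc_critical_formula derives_mono)
  show "lcF 0 D"
    using lc_end_formula[OF \<pi>(1)] \<pi>(2) by simp
qed

end

context kc_extension
begin

theorem complete_elim_set_of_elimination_witnesses:
  assumes \<pi>: "derivation L \<pi>" "end_formula \<pi> = Neg D" and "lcT 0 e"
    and witnesses: "elimination_witnesses L (Lambda \<pi> e) e T C"
    and Fs: "set Fs = Lambda \<pi> e"
  shows "complete_elim_set L \<pi> e (e # map T Fs)"
proof -
  define H where "H = (\<Union>s\<in>set (e # map T Fs). replF e s ` Gamma \<pi> e)"
  have w: "lcT 0 (T F)" "lcF 0 (C F)" "\<forall>F'\<in>Lambda \<pi> e. derives L {C F} (replF e (T F) F')"
    if "F \<in> set Fs" for F
    using witnesses Fs that unfolding elimination_witnesses_def by auto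
  have lc_ss: "\<forall>s\<in>set (e # map T Fs). lcT 0 s"
    using w \<open>lcT 0 e\<close> by auto
  have lc_H: "\<forall>h\<in>H. lcF 0 h"
    unfolding H_def using lc_ss by (auto intro: lc_repl_Gamma[OF \<pi>(1)])
  have lc_D: "lcF 0 (replF e s D)" if "lcT 0 s" for s
    using lc_end_formula[OF \<pi>(1)] \<pi>(2) that by (simp add: lc_repl(2))
  have double_neg_cases: "derives L (insert (Neg (Neg (C F))) H) (Neg (replF e (T F) D))"
    if "F \<in> set Fs" for F
  proof -
    have "derives L (insert (Neg (Neg (C F))) (replF e (T F) ` Gamma \<pi> e)) (Neg (replF e (T F) D))"
      using w[OF that] by (rule derives_end_formula_under_double_neg_case[OF \<pi>])
    then show ?thesis
      by (rule derives_mono) (use that in \<open>auto simp: H_def\<close>)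
  qed
  have "derives L (Gamma \<pi> e \<union> (\<lambda>F. Neg (C F)) ` Lambda \<pi> e) (Neg D)"
    using witnesses by (intro derives_end_formula_under_neg_cases[OF \<pi>])
      (auto simp: elimination_witnesses_def)
  then have neg_cases: "derives L (H \<union> (\<lambda>F. Neg (C F)) ` set Fs) (Neg D)"
    unfolding Fs H_def by (rule derives_mono) (auto simp: repl_self)
  have "derives L H (bigOr (Neg D # map (\<lambda>F. Neg (replF e (T F) D)) Fs))"
    using lc_H lc_D lc_D[OF \<open>lcT 0 e\<close>] w double_neg_cases neg_cases
    by (intro derives_bigOr_by_weak_excluded_middle) (auto simp: repl_self)
  then show ?thesis
    unfolding complete_elim_set_def H_def using lc_ss \<pi>(2) by (simp add: repl_self comp_def)
qed

end

theorem mainTheorem14: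
  fixes L :: "pfrm set" and \<pi> :: "(frm \<times> just) list" and D :: frm and e :: trm
  assumes "intermediate_logic L"
    and "\<forall>A. POr (PNeg A) (PNeg (PNeg A)) \<in> L"
    and "derivation L \<pi>"
    and "end_formula \<pi> = Neg D"
    and "e \<in> critical_terms \<pi>"
  shows "\<exists>ss. complete_elim_set L \<pi> e ss"
proof -
  interpret kc_extension L
    using assms(1,2) by unfold_locales (auto simp: intermediate_logic_def)
  obtain T C where "elimination_witnesses L (Lambda \<pi> e) e T C"
    using elimination_witnesses_exist[of "Lambda \<pi> e" e] unfolding Lambda_def by blast
  moreover obtain Fs where "set Fs = Lambda \<pi> e"
    using finite_Lambda finite_list by blast
  moreover have "lcT 0 e"
    using assms(5) unfolding critical_terms_def belongs_def by blast
  ultimately show ?thesis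
    using complete_elim_set_of_elimination_witnesses[OF assms(3,4)] by blast
qed

end
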